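(* Let $n\ge1$, $X=\{1,\dots,n\}$, $\mathcal{A}$ the algebra of all functions $X\to\mathbb{R}$ with pointwise operations, $\sigma:X\to X$ a bijection, $\tilde{\sigma}(f)=f\circ\sigma^{-1}$, and $\Delta$ a $\tilde{\sigma}$-derivation on $\mathcal{A}$. If an element $\sum_{k=0}^m f_kx^k$ of degree $m$ (so $f_m\neq0$) of the Ore extension $\mathcal{A}[x,\tilde{\sigma},\Delta]$ belongs to the centralizer of $\mathcal{A}$, then $f_m=0$ on $Sep^m(X)$.
   Context: A $\tilde{\sigma}$-derivation is an $\mathbb{R}$-linear map $\Delta:\mathcal{A}\to\mathcal{A}$ with $\Delta(fg)=\tilde{\sigma}(f)\Delta(g)+\Delta(f)g$. The Ore extension $\mathcal{A}[x,\tilde{\sigma},\Delta]$ is the ring generated by $\mathcal{A}$ and an element $x$ such that $1,x,x^2,\dots$ form a basis as a left $\mathcal{A}$-module and $xf=\tilde{\sigma}(f)x+\Delta(f)$ for all $f\in\mathcal{A}$. The centralizer of $\mathcal{A}$ is the set of elements commuting with every element of $\mathcal{A}$. $Sep^m(X)=\{p\in X:\sigma^m(p)\neq p\}$. *)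

theory Defs
  imports Complex_Main
begin

definition sigma_tilde :: "('n \<Rightarrow> 'n) \<Rightarrow> ('n \<Rightarrow> real) \<Rightarrow> ('n \<Rightarrow> real)" where
  "sigma_tilde \<sigma> f = f \<circ> inv \<sigma>"

definition is_sigma_derivation :: "('n \<Rightarrow> 'n) \<Rightarrow> (('n \<Rightarrow> real) \<Rightarrow> ('n \<Rightarrow> real)) \<Rightarrow> bool" where
  "is_sigma_derivation \<sigma> \<Delta> \<longleftrightarrow>
     (\<forall>f g. \<Delta> (\<lambda>t. f t + g t) = (\<lambda>t. \<Delta> f t + \<Delta> g t)) \<and>
     (\<forall>c f. \<Delta> (\<lambda>t. c * f t) = (\<lambda>t. c * \<Delta> f t)) \<and>
     (\<forall>f g. \<Delta> (\<lambda>t. f t * g t) = (\<lambda>t. sigma_tilde \<sigma> f t * \<Delta> g t + \<Delta> f t * g t))"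

text \<open>Elements of the Ore extension A[x, sigma_tilde, Delta] are represented by their
  coefficient sequences c :: nat \<Rightarrow> A (element \<Sum> c_j x^j, finitely supported).
  Left multiplication by x, using x h = sigma_tilde(h) x + Delta(h):
  x \<cdot> \<Sum> c_j x^j = \<Sum> (sigma_tilde(c_j) x^(j+1) + Delta(c_j) x^j).\<close>
definition ore_xmul :: "('n \<Rightarrow> 'n) \<Rightarrow> (('n \<Rightarrow> real) \<Rightarrow> ('n \<Rightarrow> real))
    \<Rightarrow> (nat \<Rightarrow> 'n \<Rightarrow> real) \<Rightarrow> (nat \<Rightarrow> 'n \<Rightarrow> real)" where
  "ore_xmul \<sigma> \<Delta> c = (\<lambda>j t. (if j = 0 then 0 else sigma_tilde \<sigma> (c (j - 1)) t) + \<Delta> (c j) t)"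

text \<open>Coefficients of x^k \<cdot> g in normal form (g \<in> A).\<close>
definition ore_xpow_times :: "('n \<Rightarrow> 'n) \<Rightarrow> (('n \<Rightarrow> real) \<Rightarrow> ('n \<Rightarrow> real))
    \<Rightarrow> nat \<Rightarrow> ('n \<Rightarrow> real) \<Rightarrow> (nat \<Rightarrow> 'n \<Rightarrow> real)" where
  "ore_xpow_times \<sigma> \<Delta> k g = (ore_xmul \<sigma> \<Delta> ^^ k) (\<lambda>i. if i = 0 then g else (\<lambda>_. 0))"

definition ore_mult_right :: "('n \<Rightarrow> 'n) \<Rightarrow> (('n \<Rightarrow> real) \<Rightarrow> ('n \<Rightarrow> real))
    \<Rightarrow> (nat \<Rightarrow> 'n \<Rightarrow> real) \<Rightarrow> nat \<Rightarrow> ('n \<Rightarrow> real) \<Rightarrow> (nat \<Rightarrow> 'n \<Rightarrow> real)" where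
  "ore_mult_right \<sigma> \<Delta> f m g = (\<lambda>j t. \<Sum>k\<le>m. f k t * ore_xpow_times \<sigma> \<Delta> k g j t)"

definition ore_mult_left :: "(nat \<Rightarrow> 'n \<Rightarrow> real) \<Rightarrow> nat \<Rightarrow> ('n \<Rightarrow> real) \<Rightarrow> (nat \<Rightarrow> 'n \<Rightarrow> real)" where
  "ore_mult_left f m g = (\<lambda>j t. if j \<le> m then g t * f j t else 0)"

definition in_centralizer :: "('n \<Rightarrow> 'n) \<Rightarrow> (('n \<Rightarrow> real) \<Rightarrow> ('n \<Rightarrow> real))
    \<Rightarrow> (nat \<Rightarrow> 'n \<Rightarrow> real) \<Rightarrow> nat \<Rightarrow> bool" where
  "in_centralizer \<sigma> \<Delta> f m \<longleftrightarrow> (\<forall>g. ore_mult_right \<sigma> \<Delta> f m g = ore_mult_left f m g)"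

definition Sep :: "nat \<Rightarrow> ('n \<Rightarrow> 'n) \<Rightarrow> 'n set" where
  "Sep m \<sigma> = {p. (\<sigma> ^^ m) p \<noteq> p}"

end

theory Submission
  imports Defs
begin

text \<open>Multiplying \<open>g \<in> A\<close> on the left by \<open>x\<^sup>k\<close> produces a polynomial of degree at most \<open>k\<close>
  whose top coefficient is \<open>g \<circ> \<sigma>\<^sup>-\<^sup>k\<close>, since \<open>\<Delta>\<close> never raises the degree. Hence the coefficient
  of \<open>x\<^sup>m\<close> in \<open>(\<Sum>f\<^sub>k x\<^sup>k) g = g (\<Sum>f\<^sub>k x\<^sup>k)\<close> gives \<open>f\<^sub>m \<cdot> (g \<circ> \<sigma>\<^sup>-\<^sup>m) = g f\<^sub>m\<close> for every \<open>g\<close>.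
  Taking for \<open>g\<close> the indicator of a point \<open>p\<close> with \<open>\<sigma>\<^sup>m p \<noteq> p\<close> makes the left side vanish at \<open>p\<close>
  and the right side equal \<open>f\<^sub>m p\<close>.\<close>

lemma sigma_derivation_zero:
  assumes "is_sigma_derivation \<sigma> \<Delta>"
  shows "\<Delta> (\<lambda>_. 0) = (\<lambda>_. 0)"
proof -
  have "\<forall>c h. \<Delta> (\<lambda>t. c * h t) = (\<lambda>t. c * \<Delta> h t)"
    using assms unfolding is_sigma_derivation_def by blast
  from this[rule_format, of 0 "\<lambda>_. 0"] show ?thesis by simp
qed

lemma ore_xpow_times_above_degree:
  assumes "is_sigma_derivation \<sigma> \<Delta>" and "k < j"
  shows "ore_xpow_times \<sigma> \<Delta> k g j = (\<lambda>_. 0)"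
  using assms(2)
proof (induction k arbitrary: j)
  case 0
  then show ?case by (simp add: ore_xpow_times_def)
next
  case (Suc k)
  then have "ore_xpow_times \<sigma> \<Delta> k g (j - 1) = (\<lambda>_. 0)" "ore_xpow_times \<sigma> \<Delta> k g j = (\<lambda>_. 0)"
    by auto
  with Suc.prems show ?case
    by (simp add: ore_xpow_times_def ore_xmul_def sigma_tilde_def comp_def
        sigma_derivation_zero[OF assms(1)])
qed

lemma ore_xpow_times_leading_coeff:
  assumes "is_sigma_derivation \<sigma> \<Delta>"
  shows "ore_xpow_times \<sigma> \<Delta> k g k = g \<circ> (inv \<sigma> ^^ k)"
proof (induction k)
  case 0
  then show ?case by (simp add: ore_xpow_times_def)
next
  case (Suc k)
  have "ore_xpow_times \<sigma> \<Delta> (Suc k) g = ore_xmul \<sigma> \<Delta> (ore_xpow_times \<sigma> \<Delta> k g)"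
    by (simp add: ore_xpow_times_def)
  moreover have "ore_xpow_times \<sigma> \<Delta> k g (Suc k) = (\<lambda>_. 0)"
    using ore_xpow_times_above_degree[OF assms] by simp
  ultimately show ?case
    using Suc.IH by (simp add: ore_xmul_def sigma_tilde_def comp_def funpow_Suc_right
        sigma_derivation_zero[OF assms] del: funpow.simps)
qed

lemma ore_mult_right_leading_coeff:
  assumes "is_sigma_derivation \<sigma> \<Delta>"
  shows "ore_mult_right \<sigma> \<Delta> f m g m t = f m t * g ((inv \<sigma> ^^ m) t)"
proof -
  have "ore_mult_right \<sigma> \<Delta> f m g m t = (\<Sum>k\<in>{m}. f k t * ore_xpow_times \<sigma> \<Delta> k g m t)"
    unfolding ore_mult_right_def
    by (rule sum.mono_neutral_right) (auto simp: ore_xpow_times_above_degree[OF assms])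
  then show ?thesis
    by (simp add: ore_xpow_times_leading_coeff[OF assms])
qed

lemma centralizer_leading_coeff:
  assumes "is_sigma_derivation \<sigma> \<Delta>" and "in_centralizer \<sigma> \<Delta> f m"
  shows "f m t * g ((inv \<sigma> ^^ m) t) = g t * f m t"
proof -
  have "ore_mult_right \<sigma> \<Delta> f m g m t = ore_mult_left f m g m t"
    using assms(2) unfolding in_centralizer_def by simp
  then show ?thesis
    by (simp add: ore_mult_right_leading_coeff[OF assms(1)] ore_mult_left_def)
qed

theorem theorem4:
  fixes \<sigma> :: "'n::finite \<Rightarrow> 'n"
    and \<Delta> :: "('n \<Rightarrow> real) \<Rightarrow> ('n \<Rightarrow> real)"
    and f :: "nat \<Rightarrow> 'n \<Rightarrow> real"
    and m :: nat
  assumes "bij \<sigma>"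
    and "is_sigma_derivation \<sigma> \<Delta>"
    and "f m \<noteq> (\<lambda>_. 0)"
    and "in_centralizer \<sigma> \<Delta> f m"
  shows "\<forall>p \<in> Sep m \<sigma>. f m p = 0"
proof
  fix p assume "p \<in> Sep m \<sigma>"
  then have "(\<sigma> ^^ m) p \<noteq> p" by (simp add: Sep_def)
  moreover have "(\<sigma> ^^ m) ((inv \<sigma> ^^ m) p) = p"
    using fn_o_inv_fn_is_id[OF assms(1), of m] by (simp add: fun_eq_iff)
  ultimately have "(inv \<sigma> ^^ m) p \<noteq> p" by metis
  moreover have "f m p * (if (inv \<sigma> ^^ m) p = p then 1 else 0) = (if p = p then 1 else 0) * f m p"
    using centralizer_leading_coeff[OF assms(2,4), of p "\<lambda>t. if t = p then 1 else 0"] .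
  ultimately show "f m p = 0" by simp
qed

end
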